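(* Let $G$ be a Schur positive tripartite graph. If all stable tripartitions of $G$ have the same type, then every stable tripartition of $G$ is balanced, i.e., its three block sizes pairwise differ by at most $1$.
   Context: For a finite simple graph $G$, the chromatic symmetric function is $X_G=\sum_{\kappa}\prod_{v\in V(G)}x_{\kappa(v)}$ over proper colorings $\kappa:V(G)\to\{1,2,\dots\}$; $G$ is Schur positive if all coefficients of $X_G$ in the Schur basis are nonnegative. A stable tripartition of $G$ is a set partition of $V(G)$ into three stable (independent) sets; its type is the integer partition formed by the three block sizes. A tripartite graph is a graph admitting a stable tripartition. *)

theory Defs
  imports Main "HOL-Library.FuncSet" "HOL-Library.Multiset"
begin

definition simple_graph :: "'a set \<Rightarrow> ('a \<Rightarrow> 'a \<Rightarrow> bool) \<Rightarrow> bool" where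
  "simple_graph V E \<longleftrightarrow> finite V \<and> (\<forall>u v. E u v \<longrightarrow> u \<in> V \<and> v \<in> V)
     \<and> (\<forall>u v. E u v \<longrightarrow> E v u) \<and> (\<forall>v. \<not> E v v)"

definition stable_set :: "('a \<Rightarrow> 'a \<Rightarrow> bool) \<Rightarrow> 'a set \<Rightarrow> bool" where
  "stable_set E S \<longleftrightarrow> (\<forall>u\<in>S. \<forall>v\<in>S. \<not> E u v)"

definition proper_colorings :: "'a set \<Rightarrow> ('a \<Rightarrow> 'a \<Rightarrow> bool) \<Rightarrow> nat \<Rightarrow> ('a \<Rightarrow> nat) set" where
  "proper_colorings V E k = {\<kappa> \<in> V \<rightarrow>\<^sub>E {..<k}. \<forall>u\<in>V. \<forall>v\<in>V. E u v \<longrightarrow> \<kappa> u \<noteq> \<kappa> v}"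

(* coefficient of x^alpha in X_G(x_0,...,x_{k-1}) *)
definition chrom_coeff :: "'a set \<Rightarrow> ('a \<Rightarrow> 'a \<Rightarrow> bool) \<Rightarrow> nat \<Rightarrow> (nat \<Rightarrow> nat) \<Rightarrow> nat" where
  "chrom_coeff V E k \<alpha> = card {\<kappa> \<in> proper_colorings V E k. \<forall>i. card {v\<in>V. \<kappa> v = i} = \<alpha> i}"

definition int_partition :: "nat \<Rightarrow> nat list \<Rightarrow> bool" where
  "int_partition n la \<longleftrightarrow> sorted_wrt (\<ge>) la \<and> (\<forall>p\<in>set la. 0 < p) \<and> sum_list la = n"

definition young_cells :: "nat list \<Rightarrow> (nat \<times> nat) set" where
  "young_cells la = {(i, j). i < length la \<and> j < la ! i}"

definition ssyt :: "nat list \<Rightarrow> nat \<Rightarrow> (nat \<times> nat \<Rightarrow> nat) set" where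
  "ssyt la k = {T \<in> young_cells la \<rightarrow>\<^sub>E {..<k}.
      (\<forall>i j. (i, Suc j) \<in> young_cells la \<longrightarrow> T (i, j) \<le> T (i, Suc j)) \<and>
      (\<forall>i j. (Suc i, j) \<in> young_cells la \<longrightarrow> T (i, j) < T (Suc i, j))}"

(* Kostka number: coefficient of x^alpha in the Schur polynomial s_lambda(x_0,...,x_{k-1}) *)
definition kostka :: "nat list \<Rightarrow> nat \<Rightarrow> (nat \<Rightarrow> nat) \<Rightarrow> nat" where
  "kostka la k \<alpha> = card {T \<in> ssyt la k. \<forall>i. card {c \<in> young_cells la. T c = i} = \<alpha> i}"

(* X_G is homogeneous of degree n = |V|, and the Schur functions s_lambda (lambda |- n)
   remain linearly independent after specialising to n variables, so it suffices to
   compare coefficients of all monomials in x_0,...,x_{n-1}. *)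
definition schur_positive :: "'a set \<Rightarrow> ('a \<Rightarrow> 'a \<Rightarrow> bool) \<Rightarrow> bool" where
  "schur_positive V E \<longleftrightarrow>
     (\<exists>c :: nat list \<Rightarrow> int. (\<forall>la. int_partition (card V) la \<longrightarrow> c la \<ge> 0) \<and>
        (\<forall>\<alpha>. int (chrom_coeff V E (card V) \<alpha>) =
              (\<Sum>la\<in>{la. int_partition (card V) la}. c la * int (kostka la (card V) \<alpha>))))"

definition stable_tripartition :: "'a set \<Rightarrow> ('a \<Rightarrow> 'a \<Rightarrow> bool) \<Rightarrow> 'a set set \<Rightarrow> bool" where
  "stable_tripartition V E P \<longleftrightarrow> card P = 3 \<and> \<Union>P = V \<and>
     (\<forall>B\<in>P. B \<noteq> {} \<and> stable_set E B) \<and>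
     (\<forall>B\<in>P. \<forall>C\<in>P. B \<noteq> C \<longrightarrow> B \<inter> C = {})"

definition tripartite :: "'a set \<Rightarrow> ('a \<Rightarrow> 'a \<Rightarrow> bool) \<Rightarrow> bool" where
  "tripartite V E \<longleftrightarrow> (\<exists>P. stable_tripartition V E P)"

definition partition_type :: "'a set set \<Rightarrow> nat multiset" where
  "partition_type P = image_mset card (mset_set P)"

definition balanced :: "'a set set \<Rightarrow> bool" where
  "balanced P \<longleftrightarrow> (\<forall>B\<in>P. \<forall>C\<in>P. card B \<le> card C + 1)"

end

theory Submission
  imports Defs
begin

(* Suppose a stable tripartition has blocks Y, X, Z with |X| >= |Z| + 2. Colouring the blocks
   0, 1, 2 shows that the monomial x_0^|Y| x_1^|X| x_2^|Z| occurs in X_G, so by Schur positivity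
   some s_lambda with positive coefficient contains it: there is a semistandard tableau of shape
   lambda with that content. As |X| > |Z|, some entry 1 of it can be raised to 2, so s_lambda, and
   hence X_G, also contains x_0^|Y| x_1^(|X|-1) x_2^(|Z|+1). A proper colouring with these class
   sizes is a stable tripartition whose type differs from that of the first one. *)

definition content :: "'b set \<Rightarrow> ('b \<Rightarrow> nat) \<Rightarrow> nat \<Rightarrow> nat" where
  "content C f i = card {c \<in> C. f c = i}"

lemma content_eq_iff: "content C f = \<alpha> \<longleftrightarrow> (\<forall>i. card {c \<in> C. f c = i} = \<alpha> i)"
  by (auto simp: content_def)

lemma content_fun_upd:
  assumes "finite C" "x \<in> C" "f x = a" "b \<noteq> a"
  shows "content C (f(x := b)) =
    (content C f)(a := content C f a - 1, b := Suc (content C f b))"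
proof
  fix v
  have "{c \<in> C. (f(x := b)) c = v} =
        (if v = a then {c \<in> C. f c = a} - {x}
         else if v = b then insert x {c \<in> C. f c = b} else {c \<in> C. f c = v})"
    using assms by auto
  then show "content C (f(x := b)) v =
      ((content C f)(a := content C f a - 1, b := Suc (content C f b))) v"
    using assms by (auto simp: content_def)
qed

lemma finite_young_cells: "finite (young_cells la)"
proof -
  have "young_cells la = (SIGMA i:{..<length la}. {..<la ! i})"
    by (auto simp: young_cells_def)
  then show ?thesis by simp
qed

lemma finite_ssyt: "finite (ssyt la k)"
  by (rule finite_subset[of _ "young_cells la \<rightarrow>\<^sub>E {..<k}"])
    (auto simp: ssyt_def finite_young_cells intro: finite_PiE)

lemma finite_proper_colorings: "finite V \<Longrightarrow> finite (proper_colorings V E k)"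
  by (rule finite_subset[of _ "V \<rightarrow>\<^sub>E {..<k}"])
    (auto simp: proper_colorings_def intro: finite_PiE)

lemma finite_int_partitions: "finite {la. int_partition n la}"
proof (rule finite_subset)
  show "{la. int_partition n la} \<subseteq> {xs. set xs \<subseteq> {..n} \<and> length xs \<le> n}"
  proof
    fix la assume "la \<in> {la. int_partition n la}"
    then have pos: "\<forall>p\<in>set la. 0 < p" and sum: "sum_list la = n"
      by (auto simp: int_partition_def)
    have "set la \<subseteq> {..n}"
      using sum member_le_sum_list by fastforce
    moreover have "length la \<le> sum_list la"
      using pos by (induction la) auto
    ultimately show "la \<in> {xs. set xs \<subseteq> {..n} \<and> length xs \<le> n}"
      using sum by simp
  qed
  show "finite {xs. set xs \<subseteq> {..n} \<and> length xs \<le> n}"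
    using finite_lists_length_le[of "{..n}" n] by simp
qed

lemma kostka_pos_iff:
  "0 < kostka la k \<alpha> \<longleftrightarrow> (\<exists>T \<in> ssyt la k. content (young_cells la) T = \<alpha>)"
  by (auto simp: kostka_def content_eq_iff card_gt_0_iff finite_ssyt)

lemma chrom_coeff_pos_iff:
  "finite V \<Longrightarrow> 0 < chrom_coeff V E k \<alpha> \<longleftrightarrow> (\<exists>\<kappa> \<in> proper_colorings V E k. content V \<kappa> = \<alpha>)"
  by (auto simp: chrom_coeff_def content_eq_iff card_gt_0_iff finite_proper_colorings)

lemma schur_positive_chrom_coeff_pos_transfer:
  assumes "schur_positive V E" and "0 < chrom_coeff V E (card V) \<mu>"
    and "\<And>\<nu>. int_partition (card V) \<nu> \<Longrightarrow> 0 < kostka \<nu> (card V) \<mu> \<Longrightarrow> 0 < kostka \<nu> (card V) \<alpha>"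
  shows "0 < chrom_coeff V E (card V) \<alpha>"
proof -
  let ?n = "card V" and ?L = "{la. int_partition (card V) la}"
  obtain c :: "nat list \<Rightarrow> int" where c_nonneg: "\<And>la. la \<in> ?L \<Longrightarrow> 0 \<le> c la"
    and expansion: "\<And>\<beta>. int (chrom_coeff V E ?n \<beta>) = (\<Sum>la\<in>?L. c la * int (kostka la ?n \<beta>))"
    using assms(1) unfolding schur_positive_def by auto
  have "0 < (\<Sum>la\<in>?L. c la * int (kostka la ?n \<mu>))"
    using assms(2) expansion by (metis of_nat_0_less_iff)
  then obtain \<nu> where \<nu>: "\<nu> \<in> ?L" "0 < c \<nu> * int (kostka \<nu> ?n \<mu>)"
    by (metis (no_types, lifting) not_le sum_nonpos)
  then have "0 < c \<nu> * int (kostka \<nu> ?n \<alpha>)"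
    using c_nonneg assms(3) by (auto simp: zero_less_mult_iff)
  also have "\<dots> \<le> (\<Sum>la\<in>?L. c la * int (kostka la ?n \<alpha>))"
    using \<nu>(1) c_nonneg by (intro member_le_sum) (auto simp: finite_int_partitions)
  finally show ?thesis
    using expansion by (metis of_nat_0_less_iff)
qed

lemma ssyt_raise_entry:
  assumes T: "T \<in> ssyt la k" and cell: "(i, j) \<in> young_cells la" "T (i, j) = a" "Suc a < k"
    and right: "(i, Suc j) \<in> young_cells la \<Longrightarrow> T (i, Suc j) \<noteq> a"
    and below: "(Suc i, j) \<in> young_cells la \<Longrightarrow> Suc a < T (Suc i, j)"
  shows "T((i, j) := Suc a) \<in> ssyt la k"
proof -
  from T have range: "T \<in> young_cells la \<rightarrow>\<^sub>E {..<k}"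
    and row: "\<And>i j. (i, Suc j) \<in> young_cells la \<Longrightarrow> T (i, j) \<le> T (i, Suc j)"
    and col: "\<And>i j. (Suc i, j) \<in> young_cells la \<Longrightarrow> T (i, j) < T (Suc i, j)"
    by (auto simp: ssyt_def)
  have right_ge: "Suc a \<le> T (i, Suc j)" if "(i, Suc j) \<in> young_cells la"
    using row[OF that] right[OF that] cell by simp
  have left_le: "T (i, j') \<le> a" if "j = Suc j'" for j'
    using row[of i j'] cell that by simp
  have above_lt: "T (i', j) < a" if "i = Suc i'" for i'
    using col[of i' j] cell that by simp
  show ?thesis
    unfolding ssyt_def
  proof (intro CollectI conjI allI impI)
    show "T((i, j) := Suc a) \<in> young_cells la \<rightarrow>\<^sub>E {..<k}"
      using range cell by (auto simp: PiE_def extensional_def)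
  next
    fix i' j' assume "(i', Suc j') \<in> young_cells la"
    then show "(T((i, j) := Suc a)) (i', j') \<le> (T((i, j) := Suc a)) (i', Suc j')"
      using row[of i' j'] right_ge left_le
      by (cases "(i', j') = (i, j)"; cases "(i', Suc j') = (i, j)") auto
  next
    fix i' j' assume "(Suc i', j') \<in> young_cells la"
    then show "(T((i, j) := Suc a)) (i', j') < (T((i, j) := Suc a)) (Suc i', j')"
      using col[of i' j'] below above_lt
      by (cases "(i', j') = (i, j)"; cases "(Suc i', j') = (i, j)") auto
  qed
qed

(* Call an entry a free if the entry below it, if any, exceeds a + 1. If no entry a were free,
   moving down one row would inject the entries a into the entries a + 1. The rightmost free
   entry a of its row is not followed by another a, since that one would be free as well. *)
lemma ssyt_raisable_cell:
  assumes T: "T \<in> ssyt la k"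
    and more: "content (young_cells la) T (Suc a) < content (young_cells la) T a"
  obtains i j where "(i, j) \<in> young_cells la" "T (i, j) = a"
    "(i, Suc j) \<in> young_cells la \<Longrightarrow> T (i, Suc j) \<noteq> a"
    "(Suc i, j) \<in> young_cells la \<Longrightarrow> Suc a < T (Suc i, j)"
proof -
  let ?C = "young_cells la"
  from T have row: "\<And>i j. (i, Suc j) \<in> ?C \<Longrightarrow> T (i, j) \<le> T (i, Suc j)"
    and col: "\<And>i j. (Suc i, j) \<in> ?C \<Longrightarrow> T (i, j) < T (Suc i, j)"
    by (auto simp: ssyt_def)
  define free where
    "free i j \<longleftrightarrow> (i, j) \<in> ?C \<and> T (i, j) = a \<and> ((Suc i, j) \<in> ?C \<longrightarrow> Suc a < T (Suc i, j))"
    for i j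
  have "\<exists>i j. free i j"
  proof (rule ccontr)
    assume "\<nexists>i j. free i j"
    then have "(\<lambda>(i, j). (Suc i, j)) ` {c \<in> ?C. T c = a} \<subseteq> {c \<in> ?C. T c = Suc a}"
      using col by (fastforce simp: free_def)
    then have "card {c \<in> ?C. T c = a} \<le> card {c \<in> ?C. T c = Suc a}"
      by (intro card_inj_on_le[OF _ _ finite_subset[OF _ finite_young_cells]]) (auto simp: inj_on_def)
    with more show False
      unfolding content_def by linarith
  qed
  then obtain i j0 where "free i j0"
    by blast
  define K where "K = {j. free i j}"
  have "K \<subseteq> snd ` ?C"
    by (force simp: K_def free_def)
  then have "finite K"
    using finite_young_cells finite_subset by blast
  moreover have "j0 \<in> K"
    using \<open>free i j0\<close> by (simp add: K_def)
  ultimately have j: "free i (Max K)" and j_max: "\<And>j'. free i j' \<Longrightarrow> j' \<le> Max K"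
    by (auto simp: K_def dest: Max_in)
  have "T (i, Suc (Max K)) \<noteq> a" if "(i, Suc (Max K)) \<in> ?C"
  proof
    assume "T (i, Suc (Max K)) = a"
    moreover have "Suc a < T (Suc i, Suc (Max K))" if "(Suc i, Suc (Max K)) \<in> ?C"
      using j row[OF that] that by (force simp: free_def young_cells_def)
    ultimately have "free i (Suc (Max K))"
      using that by (simp add: free_def)
    then show False
      using j_max by fastforce
  qed
  with j show ?thesis
    using that by (auto simp: free_def)
qed

lemma kostka_pos_shift:
  assumes "0 < kostka la k \<mu>" "\<mu> (Suc a) < \<mu> a" "Suc a < k"
  shows "0 < kostka la k (\<mu>(a := \<mu> a - 1, Suc a := Suc (\<mu> (Suc a))))"
proof -
  obtain T where T: "T \<in> ssyt la k" and content_T: "content (young_cells la) T = \<mu>"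
    using assms(1) by (auto simp: kostka_pos_iff)
  obtain i j where cell: "(i, j) \<in> young_cells la" "T (i, j) = a"
    and "(i, Suc j) \<in> young_cells la \<Longrightarrow> T (i, Suc j) \<noteq> a"
    and "(Suc i, j) \<in> young_cells la \<Longrightarrow> Suc a < T (Suc i, j)"
    using ssyt_raisable_cell[OF T] assms(2) content_T by blast
  then have "T((i, j) := Suc a) \<in> ssyt la k"
    using ssyt_raise_entry[OF T] assms(3) by blast
  moreover have "content (young_cells la) (T((i, j) := Suc a)) =
      \<mu>(a := \<mu> a - 1, Suc a := Suc (\<mu> (Suc a)))"
    using content_fun_upd[of "young_cells la" "(i, j)" T a "Suc a"] finite_young_cells cell content_T
    by simp
  ultimately show ?thesis
    by (auto simp: kostka_pos_iff)
qed

lemma partition_type_three: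
  "A \<noteq> B \<Longrightarrow> A \<noteq> C \<Longrightarrow> B \<noteq> C \<Longrightarrow> partition_type {A, B, C} = {#card A, card B, card C#}"
  by (simp add: partition_type_def)

lemma not_balanced_three_blocks:
  assumes "\<not> balanced P" "card P = 3"
  obtains X Y Z where "P = {Y, X, Z}" "Y \<noteq> X" "Y \<noteq> Z" "X \<noteq> Z" "card Z + 1 < card X"
proof -
  obtain X Z where XZ: "X \<in> P" "Z \<in> P" "card Z + 1 < card X"
    using assms(1) unfolding balanced_def by (meson not_le)
  have "finite P"
    using assms(2) by (simp add: card_ge_0_finite)
  moreover have "X \<noteq> Z"
    using XZ(3) by auto
  ultimately have "card (P - {X, Z}) = 1"
    using assms(2) XZ by (simp add: card_Diff_subset)
  then obtain Y where Y: "P - {X, Z} = {Y}"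
    by (auto simp: card_1_singleton_iff)
  then have "P = {Y, X, Z}"
    using XZ by auto
  moreover have "Y \<noteq> X" "Y \<noteq> Z"
    using Y by auto
  ultimately show ?thesis
    using \<open>X \<noteq> Z\<close> XZ(3) by (rule that)
qed

lemma shifted_type_neq:
  fixes x y z :: nat
  assumes "z + 1 < x"
  shows "{#y, x, z#} \<noteq> {#y, x - 1, z + 1#}"
proof
  assume "{#y, x, z#} = {#y, x - 1, z + 1#}"
  then have "x \<in># {#x - 1, z + 1#}"
    by (metis add_mset_remove_trivial union_single_eq_member)
  with assms show False
    by auto
qed

definition triple_weight :: "nat \<Rightarrow> nat \<Rightarrow> nat \<Rightarrow> nat \<Rightarrow> nat" where
  "triple_weight a b c i = (if i = 0 then a else if i = 1 then b else if i = 2 then c else 0)"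

lemma stable_tripartition_chrom_coeff_pos:
  assumes "finite V" "stable_tripartition V E {A, B, C}" "A \<noteq> B" "A \<noteq> C" "B \<noteq> C" "3 \<le> k"
  shows "0 < chrom_coeff V E k (triple_weight (card A) (card B) (card C))"
proof -
  have V: "V = A \<union> B \<union> C" and disjoint: "A \<inter> B = {}" "A \<inter> C = {}" "B \<inter> C = {}"
    and stable: "stable_set E A" "stable_set E B" "stable_set E C"
    using assms(2-5) by (auto simp: stable_tripartition_def)
  define \<kappa> where
    "\<kappa> v = (if v \<in> A then 0 :: nat else if v \<in> B then 1 else if v \<in> C then 2 else undefined)" for v
  have "\<kappa> \<in> proper_colorings V E k"
    using V disjoint stable assms(6) by (auto simp: proper_colorings_def \<kappa>_def stable_set_def)
  moreover have "{v \<in> V. \<kappa> v = i} = (if i = 0 then A else if i = 1 then B else if i = 2 then C else {})" for i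
    using V disjoint by (auto simp: \<kappa>_def)
  then have "content V \<kappa> = triple_weight (card A) (card B) (card C)"
    by (auto simp: content_def triple_weight_def)
  ultimately show ?thesis
    using assms(1) by (auto simp: chrom_coeff_pos_iff)
qed

lemma proper_coloring_stable_tripartition:
  assumes "finite V" "\<kappa> \<in> proper_colorings V E k" "content V \<kappa> = triple_weight a b c"
    and "0 < a" "0 < b" "0 < c"
  obtains Q where "stable_tripartition V E Q" "partition_type Q = {#a, b, c#}"
proof -
  define B where "B i = {v \<in> V. \<kappa> v = i}" for i
  have card_B: "card (B i) = triple_weight a b c i" for i
    using assms(3) by (simp add: B_def content_eq_iff)
  have "card (B 0) = a" "card (B 1) = b" "card (B 2) = c"
    by (simp_all add: card_B triple_weight_def)
  with assms(4-6) have nonempty: "B 0 \<noteq> {}" "B 1 \<noteq> {}" "B 2 \<noteq> {}"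
    by auto
  then have distinct: "B 0 \<noteq> B 1" "B 0 \<noteq> B 2" "B 1 \<noteq> B 2"
    by (auto simp: B_def)
  have "\<kappa> v \<in> {0, 1, 2}" if "v \<in> V" for v
  proof (rule ccontr)
    assume "\<kappa> v \<notin> {0, 1, 2}"
    then have "card (B (\<kappa> v)) = 0"
      by (simp add: card_B triple_weight_def)
    then show False
      using assms(1) that by (force simp: B_def)
  qed
  then have cover: "V = B 0 \<union> B 1 \<union> B 2"
    by (auto simp: B_def)
  have stable: "stable_set E (B i)" for i
    using assms(2) unfolding stable_set_def proper_colorings_def B_def by fastforce
  have "stable_tripartition V E {B 0, B 1, B 2}"
    unfolding stable_tripartition_def
  proof (intro conjI ballI impI)
    show "card {B 0, B 1, B 2} = 3" "\<Union> {B 0, B 1, B 2} = V"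
      using distinct cover by auto
  next
    fix D assume "D \<in> {B 0, B 1, B 2}"
    then show "D \<noteq> {}" "stable_set E D"
      using nonempty stable by auto
  next
    fix D D' assume "D \<in> {B 0, B 1, B 2}" "D' \<in> {B 0, B 1, B 2}" "D \<noteq> D'"
    then show "D \<inter> D' = {}"
      by (auto simp: B_def)
  qed
  moreover have "partition_type {B 0, B 1, B 2} = {#a, b, c#}"
    using partition_type_three[OF distinct] by (simp add: card_B triple_weight_def)
  ultimately show ?thesis
    using that by blast
qed

lemma schur_positive_shift_tripartition:
  assumes "finite V" "schur_positive V E" "stable_tripartition V E {Y, X, Z}"
    and "Y \<noteq> X" "Y \<noteq> Z" "X \<noteq> Z" "card Z + 1 < card X"
  obtains Q where "stable_tripartition V E Q" "partition_type Q = {#card Y, card X - 1, card Z + 1#}"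
proof -
  have "Y \<subseteq> V" "X \<subseteq> V" "Z \<subseteq> V" "Y \<noteq> {}" "Z \<noteq> {}"
    using assms(3) by (auto simp: stable_tripartition_def)
  with assms(1) have "0 < card Y" "0 < card Z" "card X \<le> card V"
    by (auto simp: card_gt_0_iff card_mono finite_subset)
  with assms(7) have "3 \<le> card V"
    by linarith
  let ?\<mu> = "triple_weight (card Y) (card X) (card Z)"
  let ?\<alpha> = "triple_weight (card Y) (card X - 1) (card Z + 1)"
  have "?\<mu>(1 := ?\<mu> 1 - 1, Suc 1 := Suc (?\<mu> (Suc 1))) = ?\<alpha>"
    by (auto simp: triple_weight_def)
  then have kostka_shift: "0 < kostka \<nu> (card V) ?\<alpha>" if "0 < kostka \<nu> (card V) ?\<mu>" for \<nu>
    using kostka_pos_shift[OF that, of 1] assms(7) \<open>3 \<le> card V\<close>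
    by (simp add: triple_weight_def)
  have "0 < chrom_coeff V E (card V) ?\<mu>"
    by (rule stable_tripartition_chrom_coeff_pos[OF assms(1,3-6) \<open>3 \<le> card V\<close>])
  then have "0 < chrom_coeff V E (card V) ?\<alpha>"
    by (rule schur_positive_chrom_coeff_pos_transfer[OF assms(2)]) (rule kostka_shift)
  then obtain \<kappa> where \<kappa>: "\<kappa> \<in> proper_colorings V E (card V)" "content V \<kappa> = ?\<alpha>"
    using assms(1) by (auto simp: chrom_coeff_pos_iff)
  moreover have "0 < card X - 1" "0 < card Z + 1"
    using assms(7) by linarith+
  ultimately show ?thesis
    by (rule proper_coloring_stable_tripartition[OF assms(1) _ _ \<open>0 < card Y\<close>]) (rule that)
qed

theorem lemma3p5:
  fixes V :: "'a set" and E :: "'a \<Rightarrow> 'a \<Rightarrow> bool"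
  assumes "simple_graph V E"
    and "schur_positive V E"
    and "tripartite V E"
    and "\<forall>P Q. stable_tripartition V E P \<and> stable_tripartition V E Q
               \<longrightarrow> partition_type P = partition_type Q"
  shows "\<forall>P. stable_tripartition V E P \<longrightarrow> balanced P"
proof (intro allI impI)
  fix P assume P: "stable_tripartition V E P"
  show "balanced P"
  proof (rule ccontr)
    assume "\<not> balanced P"
    moreover have "card P = 3"
      using P by (simp add: stable_tripartition_def)
    ultimately obtain X Y Z where P_eq: "P = {Y, X, Z}" and distinct: "Y \<noteq> X" "Y \<noteq> Z" "X \<noteq> Z"
      and unbalanced: "card Z + 1 < card X"
      by (rule not_balanced_three_blocks)
    have "finite V"
      using assms(1) by (simp add: simple_graph_def)
    then obtain Q where Q: "stable_tripartition V E Q"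
      and type_Q: "partition_type Q = {#card Y, card X - 1, card Z + 1#}"
      by (rule schur_positive_shift_tripartition[OF _ assms(2) P[unfolded P_eq] distinct unbalanced])
    have "partition_type P = {#card Y, card X, card Z#}"
      using partition_type_three distinct by (simp add: P_eq)
    moreover have "partition_type P = partition_type Q"
      using assms(4) P Q by blast
    ultimately show False
      using shifted_type_neq[OF unbalanced] type_Q by simp
  qed
qed

end
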